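(* Let $N, J \ge 1$ be integers and let $F_1,\dots,F_J:\mathbb{R}_+^N\to\mathbb{R}_+$ be upper semicontinuous, concave functions that are homogeneous of degree 1. Let $x\in\mathbb{R}_+^N$. Then there exist $x_1,\dots,x_J\in\mathbb{R}_+^N$ with $\sum_{j=1}^J x_j=x$ attaining $$\max\Big\{\sum_{j=1}^J F_j(y_j): y_j\in\mathbb{R}_+^N \text{ for all } j,\ \sum_{j=1}^J y_j=x\Big\}$$ such that $x_j\neq 0$ for at most $N$ indices $j$.
   Context: Homogeneous of degree 1 means $F_j(\lambda x)=\lambda F_j(x)$ for all $\lambda\ge0$, $x\in\mathbb{R}_+^N$. *)

theory Defs
  imports "HOL-Analysis.Analysis"
begin

text \<open>The nonnegative orthant R_+^N, with N = CARD('n).\<close>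
definition nonneg_orthant :: "(real ^ 'n) set" where
  "nonneg_orthant = {y. \<forall>i. 0 \<le> y $ i}"

definition usc_on :: "'a::topological_space set \<Rightarrow> ('a \<Rightarrow> real) \<Rightarrow> bool" where
  "usc_on S f \<longleftrightarrow> (\<forall>t. openin (top_of_set S) {x \<in> S. f x < t})"

definition homogeneous1_on :: "(real ^ 'n) set \<Rightarrow> (real ^ 'n \<Rightarrow> real) \<Rightarrow> bool" where
  "homogeneous1_on S f \<longleftrightarrow> (\<forall>c\<ge>0. \<forall>x\<in>S. f (c *\<^sub>R x) = c * f x)"

end

theory Submission
  imports Defs
begin

text \<open>A maximiser exists because the feasible allocations form a compact set on which the
  total value is upper semicontinuous. Among all maximisers take one, xs, whose support
  S = {j. xs j \<noteq> 0} is smallest. If |S| > N, the vectors xs j, j \<in> S, admit a linear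
  dependency \<Sum> c j xs j = 0 with c \<noteq> 0, and since they are nonzero points of the orthant
  c takes both signs. Moving along (1 - s c j) xs j keeps the allocation feasible for all s in
  an interval around 0, and by homogeneity the total value is affine in s, so it is constant
  there. At the endpoint s = 1 / max c one component vanishes, contradicting minimality.\<close>

definition allocations :: "nat \<Rightarrow> real ^ 'n \<Rightarrow> (nat \<Rightarrow> real ^ 'n) set" where
  "allocations J x = {ys. (\<forall>j<J. ys j \<in> nonneg_orthant) \<and> (\<Sum>j<J. ys j) = x}"

definition optimal_allocation ::
    "(nat \<Rightarrow> real ^ 'n \<Rightarrow> real) \<Rightarrow> nat \<Rightarrow> real ^ 'n \<Rightarrow> (nat \<Rightarrow> real ^ 'n) \<Rightarrow> bool" where
  "optimal_allocation F J x xs \<longleftrightarrow> xs \<in> allocations J x \<and>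
     (\<forall>ys\<in>allocations J x. (\<Sum>j<J. F j (ys j)) \<le> (\<Sum>j<J. F j (xs j)))"

lemma usc_on_const: "usc_on S (\<lambda>x. c)"
  unfolding usc_on_def
proof
  fix t
  show "openin (top_of_set S) {x \<in> S. c < t}"
    by (cases "c < t") auto
qed

lemma usc_on_add:
  assumes f: "usc_on S f" and g: "usc_on S g"
  shows "usc_on S (\<lambda>x. f x + g x)"
  unfolding usc_on_def
proof
  fix t
  have "{x \<in> S. f x + g x < t} = (\<Union>r. {x \<in> S. f x < r} \<inter> {x \<in> S. g x < t - r})"
  proof (intro set_eqI iffI)
    fix x assume "x \<in> {x \<in> S. f x + g x < t}"
    then have "x \<in> S" "f x < (f x + (t - g x)) / 2" "g x < t - (f x + (t - g x)) / 2"
      by (auto simp: field_simps)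
    then show "x \<in> (\<Union>r. {x \<in> S. f x < r} \<inter> {x \<in> S. g x < t - r})" by blast
  qed auto
  then show "openin (top_of_set S) {x \<in> S. f x + g x < t}"
    using f g unfolding usc_on_def by (auto intro!: openin_Union)
qed

lemma usc_on_sum:
  assumes "finite I" "\<And>i. i \<in> I \<Longrightarrow> usc_on S (f i)"
  shows "usc_on S (\<lambda>x. \<Sum>i\<in>I. f i x)"
  using assms by (induction I rule: finite_induct) (simp_all add: usc_on_const usc_on_add)

lemma usc_on_compose:
  assumes f: "usc_on T f" and h: "continuous_on S h" and "h ` S \<subseteq> T"
  shows "usc_on S (\<lambda>x. f (h x))"
  unfolding usc_on_def
proof
  fix t
  obtain U where "open U" and U: "{y \<in> T. f y < t} = T \<inter> U"
    using f unfolding usc_on_def openin_open by blast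
  with \<open>h ` S \<subseteq> T\<close> have "{x \<in> S. f (h x) < t} = S \<inter> h -` U"
    by blast
  then show "openin (top_of_set S) {x \<in> S. f (h x) < t}"
    using continuous_openin_preimage_gen[OF h \<open>open U\<close>] by simp
qed

lemma usc_on_compact_attains_max:
  fixes K :: "'a::t2_space set"
  assumes "compact K" "K \<noteq> {}" "usc_on K f"
  shows "\<exists>z\<in>K. \<forall>y\<in>K. f y \<le> f z"
proof -
  define above where "above y = {z \<in> K. f y \<le> f z}" for y
  have "closed (above y)" for y
  proof -
    have "closedin (top_of_set K) (K - {z \<in> K. f z < f y})"
      using \<open>usc_on K f\<close> unfolding usc_on_def by (intro closedin_diff) auto
    moreover have "K - {z \<in> K. f z < f y} = above y"
      by (auto simp: above_def)
    ultimately show ?thesis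
      using closedin_closed_trans compact_imp_closed \<open>compact K\<close> by metis
  qed
  moreover have "K \<inter> (\<Inter>y\<in>I. above y) \<noteq> {}" if "finite I" "I \<subseteq> K" for I
  proof (cases "I = {}")
    case True
    then show ?thesis using \<open>K \<noteq> {}\<close> by simp
  next
    case False
    obtain m where "m \<in> I" "Max (f ` I) = f m"
      using obtains_MAX[OF \<open>finite I\<close> False] by metis
    then have "m \<in> K \<inter> (\<Inter>y\<in>I. above y)"
      using \<open>finite I\<close> \<open>I \<subseteq> K\<close> Max_ge[of "f ` I"] by (auto simp: above_def)
    then show ?thesis by blast
  qed
  ultimately have "K \<inter> (\<Inter>y\<in>K. above y) \<noteq> {}"
    by (rule compact_imp_fip_image[OF \<open>compact K\<close>])
  then show ?thesis by (auto simp: above_def)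
qed

lemma allocation_in_cbox:
  assumes "ys \<in> allocations J x" "j < J"
  shows "ys j \<in> cbox 0 x"
  unfolding mem_box_cart
proof
  fix i
  have "ys j $ i \<le> (\<Sum>k<J. ys k $ i)"
    using assms by (intro member_le_sum) (auto simp: allocations_def nonneg_orthant_def)
  also have "\<dots> = x $ i"
    using assms(1) by (simp add: allocations_def flip: sum_component)
  finally show "0 $ i \<le> ys j $ i \<and> ys j $ i \<le> x $ i"
    using assms by (auto simp: allocations_def nonneg_orthant_def)
qed

lemma optimal_allocation_exists:
  fixes F :: "nat \<Rightarrow> real ^ 'n \<Rightarrow> real" and x :: "real ^ 'n"
  assumes "J \<ge> 1" "x \<in> nonneg_orthant"
    and usc: "\<forall>j<J. usc_on nonneg_orthant (F j)"
  shows "\<exists>xs. optimal_allocation F J x xs"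
proof -
  \<comment> \<open>Components beyond J are unconstrained; fixing them to 0 makes the feasible set compact.\<close>
  define B where "B j = (if j < J then cbox 0 x else {0})" for j
  define K where "K = Pi UNIV B \<inter> {ys. (\<Sum>j<J. ys j) = x}"
  define total where "total ys = (\<Sum>j<J. F j (ys j))" for ys
  have "compact (Pi UNIV B)"
  proof -
    have "compactin (product_topology (\<lambda>i. euclidean) UNIV) (PiE UNIV B)"
      by (simp add: compactin_PiE B_def)
    then show ?thesis
      by (simp add: euclidean_product_topology PiE_UNIV_domain)
  qed
  moreover have "closed {ys :: nat \<Rightarrow> real ^ 'n. (\<Sum>j<J. ys j) = x}"
    by (intro closed_Collect_eq continuous_on_sum continuous_on_product_coordinates
        continuous_on_const)
  ultimately have "compact K"
    unfolding K_def by (rule compact_Int_closed)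
  have K_allocations: "K \<subseteq> allocations J x"
  proof
    fix ys assume "ys \<in> K"
    then have "ys j \<in> B j" for j
      by (auto simp: K_def)
    then have "\<forall>j<J. ys j \<in> cbox 0 x"
      by (metis B_def)
    moreover have "(\<Sum>j<J. ys j) = x"
      using \<open>ys \<in> K\<close> by (simp add: K_def)
    ultimately show "ys \<in> allocations J x"
      by (auto simp: allocations_def nonneg_orthant_def mem_box_cart)
  qed
  have "(\<lambda>j. if j = 0 then x else 0) \<in> K"
    using assms(1,2) by (auto simp: K_def B_def mem_box_cart nonneg_orthant_def)
  then have "K \<noteq> {}" by blast
  have "usc_on K total"
    unfolding total_def
  proof (rule usc_on_sum)
    fix j assume "j \<in> {..<J}"
    then show "usc_on K (\<lambda>ys. F j (ys j))"
      using K_allocations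
      by (intro usc_on_compose[OF usc[rule_format]]
          continuous_on_subset[OF continuous_on_product_coordinates])
        (auto simp: allocations_def)
  qed simp
  then obtain z where "z \<in> K" and z_max: "\<And>ys. ys \<in> K \<Longrightarrow> total ys \<le> total z"
    using usc_on_compact_attains_max[OF \<open>compact K\<close> \<open>K \<noteq> {}\<close>] by blast
  have "total ys \<le> total z" if "ys \<in> allocations J x" for ys
  proof -
    define ys' where "ys' j = (if j < J then ys j else 0)" for j
    have "ys' \<in> K"
      using that allocation_in_cbox[OF that] by (auto simp: K_def B_def ys'_def allocations_def)
    moreover have "total ys' = total ys"
      by (simp add: total_def ys'_def)
    ultimately show ?thesis using z_max by metis
  qed
  then show ?thesis
    using \<open>z \<in> K\<close> K_allocations by (auto simp: optimal_allocation_def total_def)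
qed

lemma card_gt_DIM_imp_dependent_family:
  fixes v :: "'i \<Rightarrow> 'a::euclidean_space"
  assumes "finite S" "card S > DIM('a)"
  obtains c :: "'i \<Rightarrow> real"
  where "\<forall>j. j \<notin> S \<longrightarrow> c j = 0" "\<exists>j\<in>S. c j \<noteq> 0" "(\<Sum>j\<in>S. c j *\<^sub>R v j) = 0"
proof (cases "inj_on v S")
  case False
  then obtain j k where jk: "j \<in> S" "k \<in> S" "j \<noteq> k" "v j = v k"
    unfolding inj_on_def by blast
  define c :: "'i \<Rightarrow> real" where "c i = (if i = j then 1 else if i = k then -1 else 0)" for i
  have "(\<Sum>i\<in>S. c i *\<^sub>R v i) = (\<Sum>i\<in>{j, k}. c i *\<^sub>R v i)"
    using jk \<open>finite S\<close> by (intro sum.mono_neutral_right) (auto simp: c_def)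
  also have "\<dots> = 0"
    using jk by (simp add: c_def)
  finally show ?thesis
    using jk by (intro that[of c]) (auto simp: c_def)
next
  case True
  then have "card (v ` S) > DIM('a)"
    using assms(2) by (simp add: card_image)
  then have "dependent (v ` S)"
    by (rule dependent_biggerset)
  then obtain u where u: "\<exists>w\<in>v ` S. u w \<noteq> 0" "(\<Sum>w\<in>v ` S. u w *\<^sub>R w) = 0"
    using real_vector.dependent_finite[of "v ` S"] \<open>finite S\<close> by auto
  define c where "c i = (if i \<in> S then u (v i) else 0)" for i
  show ?thesis
  proof (rule that)
    show "\<forall>j. j \<notin> S \<longrightarrow> c j = 0"
      by (simp add: c_def)
    show "\<exists>j\<in>S. c j \<noteq> 0"
      using u(1) by (auto simp: c_def)
    have "(\<Sum>i\<in>S. c i *\<^sub>R v i) = (\<Sum>w\<in>v ` S. u w *\<^sub>R w)"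
      using True by (simp add: c_def sum.reindex)
    with u(2) show "(\<Sum>i\<in>S. c i *\<^sub>R v i) = 0"
      by simp
  qed
qed

lemma nonneg_orthant_nonneg_combination_eq_0:
  fixes v :: "'i \<Rightarrow> real ^ 'n"
  assumes "finite S" "\<forall>j\<in>S. v j \<in> nonneg_orthant - {0}"
    and "\<forall>j\<in>S. d j \<ge> 0" "(\<Sum>j\<in>S. d j *\<^sub>R v j) = 0"
  shows "\<forall>j\<in>S. d j = 0"
proof
  fix j assume "j \<in> S"
  have "d j * v j $ i = 0" for i
  proof -
    have "(\<Sum>k\<in>S. d k *\<^sub>R v k) $ i = 0"
      using assms(4) by simp
    then have "(\<Sum>k\<in>S. d k * v k $ i) = 0"
      by (simp add: sum_component)
    moreover have "\<forall>k\<in>S. 0 \<le> d k * v k $ i"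
      using assms(2,3) by (simp add: nonneg_orthant_def)
    ultimately have "\<forall>k\<in>S. d k * v k $ i = 0"
      by (simp add: sum_nonneg_eq_0_iff[OF \<open>finite S\<close>])
    then show ?thesis
      using \<open>j \<in> S\<close> by blast
  qed
  moreover obtain i where "v j $ i \<noteq> 0"
    using assms(2) \<open>j \<in> S\<close> by (auto simp: vec_eq_iff)
  ultimately show "d j = 0"
    by (metis mult_eq_0_iff)
qed

lemma nonneg_orthant_dependency_signs:
  fixes v :: "'i \<Rightarrow> real ^ 'n"
  assumes "finite S" "\<forall>j\<in>S. v j \<in> nonneg_orthant - {0}"
    and "\<exists>j\<in>S. c j \<noteq> 0" "(\<Sum>j\<in>S. c j *\<^sub>R v j) = 0"
  shows "\<exists>j\<in>S. c j > 0" "\<exists>j\<in>S. c j < 0"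
proof -
  note coeffs_vanish = nonneg_orthant_nonneg_combination_eq_0[OF assms(1,2)]
  show "\<exists>j\<in>S. c j > 0"
  proof (rule ccontr)
    assume "\<not> (\<exists>j\<in>S. c j > 0)"
    then have "\<forall>j\<in>S. - c j \<ge> 0"
      by (simp add: not_less)
    moreover have "(\<Sum>j\<in>S. (- c j) *\<^sub>R v j) = 0"
      using assms(4) by (simp add: sum_negf)
    ultimately have "\<forall>j\<in>S. - c j = 0"
      by (rule coeffs_vanish)
    with assms(3) show False
      by simp
  qed
  show "\<exists>j\<in>S. c j < 0"
  proof (rule ccontr)
    assume "\<not> (\<exists>j\<in>S. c j < 0)"
    then have "\<forall>j\<in>S. c j \<ge> 0"
      by (simp add: not_less)
    then have "\<forall>j\<in>S. c j = 0"
      using assms(4) by (rule coeffs_vanish)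
    with assms(3) show False
      by simp
  qed
qed

lemma homogeneous1_on_sum_scaleR:
  assumes "\<And>j. j \<in> I \<Longrightarrow> homogeneous1_on S (F j)"
    and "\<And>j. j \<in> I \<Longrightarrow> t j \<ge> 0" "\<And>j. j \<in> I \<Longrightarrow> v j \<in> S"
  shows "(\<Sum>j\<in>I. F j (t j *\<^sub>R v j)) = (\<Sum>j\<in>I. t j * F j (v j))"
  using assms by (intro sum.cong) (auto simp: homogeneous1_on_def)

lemma allocation_move_along_dependency:
  fixes F :: "nat \<Rightarrow> real ^ 'n \<Rightarrow> real"
  assumes hom: "\<forall>j<J. homogeneous1_on nonneg_orthant (F j)"
    and xs: "xs \<in> allocations J x"
    and dep: "(\<Sum>j<J. c j *\<^sub>R xs j) = 0"
    and s: "\<forall>j<J. s * c j \<le> 1"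
  shows "(\<lambda>j. (1 - s * c j) *\<^sub>R xs j) \<in> allocations J x"
    and "(\<Sum>j<J. F j ((1 - s * c j) *\<^sub>R xs j))
           = (\<Sum>j<J. F j (xs j)) - s * (\<Sum>j<J. c j * F j (xs j))"
proof -
  have "(\<Sum>j<J. (1 - s * c j) *\<^sub>R xs j) = (\<Sum>j<J. xs j) - s *\<^sub>R (\<Sum>j<J. c j *\<^sub>R xs j)"
    by (simp add: algebra_simps sum_subtractf scaleR_sum_right)
  then show "(\<lambda>j. (1 - s * c j) *\<^sub>R xs j) \<in> allocations J x"
    using xs s dep by (auto simp: allocations_def nonneg_orthant_def)
  have "(\<Sum>j<J. F j ((1 - s * c j) *\<^sub>R xs j)) = (\<Sum>j<J. (1 - s * c j) * F j (xs j))"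
    using hom xs s by (intro homogeneous1_on_sum_scaleR) (auto simp: allocations_def)
  also have "\<dots> = (\<Sum>j<J. F j (xs j)) - s * (\<Sum>j<J. c j * F j (xs j))"
    by (simp add: algebra_simps sum_subtractf sum_distrib_left)
  finally show "(\<Sum>j<J. F j ((1 - s * c j) *\<^sub>R xs j))
                  = (\<Sum>j<J. F j (xs j)) - s * (\<Sum>j<J. c j * F j (xs j))" .
qed

lemma optimal_allocation_move_along_dependency:
  fixes F :: "nat \<Rightarrow> real ^ 'n \<Rightarrow> real"
  assumes hom: "\<forall>j<J. homogeneous1_on nonneg_orthant (F j)"
    and opt: "optimal_allocation F J x xs"
    and dep: "(\<Sum>j<J. c j *\<^sub>R xs j) = 0"
    and le1: "\<forall>j<J. c j \<le> 1" and "k < J" "c k < 0"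
  shows "optimal_allocation F J x (\<lambda>j. (1 - c j) *\<^sub>R xs j)"
proof -
  define D where "D = (\<Sum>j<J. c j * F j (xs j))"
  have xs: "xs \<in> allocations J x"
    and xs_max: "\<And>ys. ys \<in> allocations J x \<Longrightarrow> (\<Sum>j<J. F j (ys j)) \<le> (\<Sum>j<J. F j (xs j))"
    using opt by (auto simp: optimal_allocation_def)
  have move: "(\<lambda>j. (1 - s * c j) *\<^sub>R xs j) \<in> allocations J x"
      "(\<Sum>j<J. F j ((1 - s * c j) *\<^sub>R xs j)) = (\<Sum>j<J. F j (xs j)) - s * D"
    if "\<forall>j<J. s * c j \<le> 1" for s
    using allocation_move_along_dependency[OF hom xs dep that] by (simp_all add: D_def)
  \<comment> \<open>The total value along the feasible segment is affine in s and maximal at the interior point 0.\<close>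
  have D_sign: "s * D \<ge> 0" if "\<forall>j<J. s * c j \<le> 1" for s
    using xs_max[OF move(1)[OF that]] move(2)[OF that] by simp
  define m where "m = Min (c ` {..<J})"
  have "m \<le> c k" "\<forall>j<J. m \<le> c j"
    using \<open>k < J\<close> by (simp_all add: m_def)
  with \<open>c k < 0\<close> have "\<forall>j<J. (1 / m) * c j \<le> 1"
    by (auto simp: field_simps)
  with D_sign have "(1 / m) * D \<ge> 0" by blast
  moreover have "1 * D \<ge> 0"
    using D_sign[of 1] le1 by simp
  ultimately have "D = 0"
    using \<open>m \<le> c k\<close> \<open>c k < 0\<close> by (simp add: zero_le_divide_iff)
  then show ?thesis
    using move[of 1] le1 xs_max by (simp add: optimal_allocation_def)
qed

lemma optimal_allocation_smaller_support:
  fixes F :: "nat \<Rightarrow> real ^ 'n \<Rightarrow> real"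
  assumes hom: "\<forall>j<J. homogeneous1_on nonneg_orthant (F j)"
    and opt: "optimal_allocation F J x xs"
    and big: "card {j. j < J \<and> xs j \<noteq> 0} > CARD('n)"
  obtains xs' where "optimal_allocation F J x xs'"
    "card {j. j < J \<and> xs' j \<noteq> 0} < card {j. j < J \<and> xs j \<noteq> 0}"
proof -
  define S where "S = {j. j < J \<and> xs j \<noteq> 0}"
  have "finite S" "S \<subseteq> {..<J}"
    by (auto simp: S_def)
  have xs_nonzero: "\<forall>j\<in>S. xs j \<in> nonneg_orthant - {0}"
    using opt by (auto simp: S_def optimal_allocation_def allocations_def)
  have "card S > DIM(real ^ 'n)"
    using big by (simp add: S_def)
  then obtain c where c_outside: "\<forall>j. j \<notin> S \<longrightarrow> c j = 0" and c_nonzero: "\<exists>j\<in>S. c j \<noteq> 0"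
    and c_dep: "(\<Sum>j\<in>S. c j *\<^sub>R xs j) = 0"
    by (rule card_gt_DIM_imp_dependent_family[OF \<open>finite S\<close>])
  note signs = nonneg_orthant_dependency_signs[OF \<open>finite S\<close> xs_nonzero c_nonzero c_dep]
  then obtain k where "k \<in> S" "c k < 0"
    by blast
  have "S \<noteq> {}"
    using \<open>k \<in> S\<close> by blast
  define M where "M = Max (c ` S)"
  obtain jM where "jM \<in> S" "M = c jM"
    unfolding M_def by (rule obtains_MAX[OF \<open>finite S\<close> \<open>S \<noteq> {}\<close>])
  have c_le_M: "c j \<le> M" if "j \<in> S" for j
    unfolding M_def using \<open>finite S\<close> that by (intro Max_ge) simp_all
  have "M > 0"
    using signs(1) c_le_M by (meson less_le_trans)
  define d where "d j = c j / M" for j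
  have "(\<Sum>j<J. d j *\<^sub>R xs j) = (1 / M) *\<^sub>R (\<Sum>j\<in>S. c j *\<^sub>R xs j)"
    using \<open>S \<subseteq> {..<J}\<close> c_outside
    by (simp add: d_def scaleR_sum_right sum.mono_neutral_left[of "{..<J}" S])
  then have "(\<Sum>j<J. d j *\<^sub>R xs j) = 0"
    using c_dep by simp
  moreover have "\<forall>j<J. d j \<le> 1"
  proof (intro allI impI)
    fix j
    show "d j \<le> 1"
      using c_le_M[of j] c_outside \<open>M > 0\<close> by (cases "j \<in> S") (simp_all add: d_def)
  qed
  moreover have "k < J"
    using \<open>k \<in> S\<close> \<open>S \<subseteq> {..<J}\<close> by blast
  moreover have "d k < 0"
    using \<open>c k < 0\<close> \<open>M > 0\<close> by (simp add: d_def divide_neg_pos)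
  ultimately have "optimal_allocation F J x (\<lambda>j. (1 - d j) *\<^sub>R xs j)"
    by (rule optimal_allocation_move_along_dependency[OF hom opt])
  moreover have "card {j. j < J \<and> (1 - d j) *\<^sub>R xs j \<noteq> 0} < card S"
  proof -
    have "{j. j < J \<and> (1 - d j) *\<^sub>R xs j \<noteq> 0} \<subseteq> S - {jM}"
      using \<open>M = c jM\<close> \<open>M > 0\<close> by (auto simp: d_def S_def)
    then have "card {j. j < J \<and> (1 - d j) *\<^sub>R xs j \<noteq> 0} \<le> card (S - {jM})"
      using \<open>finite S\<close> by (intro card_mono) simp_all
    also have "\<dots> < card S"
      using \<open>finite S\<close> \<open>jM \<in> S\<close> by (rule card_Diff1_less)
    finally show ?thesis .
  qed
  ultimately show ?thesis
    unfolding S_def by (rule that)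
qed

theorem proposition2:
  fixes J :: nat and F :: "nat \<Rightarrow> real ^ 'n \<Rightarrow> real" and x :: "real ^ 'n"
  assumes "J \<ge> 1"
    and "\<And>j. j < J \<Longrightarrow> \<forall>y\<in>nonneg_orthant. F j y \<ge> 0"
    and "\<And>j. j < J \<Longrightarrow> usc_on nonneg_orthant (F j)"
    and "\<And>j. j < J \<Longrightarrow> concave_on nonneg_orthant (F j)"
    and "\<And>j. j < J \<Longrightarrow> homogeneous1_on nonneg_orthant (F j)"
    and "x \<in> nonneg_orthant"
  shows "\<exists>xs :: nat \<Rightarrow> real ^ 'n.
           (\<forall>j<J. xs j \<in> nonneg_orthant) \<and> (\<Sum>j<J. xs j) = x \<and>
           (\<forall>ys :: nat \<Rightarrow> real ^ 'n. (\<forall>j<J. ys j \<in> nonneg_orthant) \<and> (\<Sum>j<J. ys j) = x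
              \<longrightarrow> (\<Sum>j<J. F j (ys j)) \<le> (\<Sum>j<J. F j (xs j))) \<and>
           card {j. j < J \<and> xs j \<noteq> 0} \<le> CARD('n)"
proof -
  have usc: "\<forall>j<J. usc_on nonneg_orthant (F j)"
    using assms(3) by simp
  have hom: "\<forall>j<J. homogeneous1_on nonneg_orthant (F j)"
    using assms(5) by simp
  obtain xs0 where "optimal_allocation F J x xs0"
    using optimal_allocation_exists[OF assms(1,6) usc] by blast
  then obtain xs where opt: "optimal_allocation F J x xs"
    and minimal: "\<And>ys. optimal_allocation F J x ys \<Longrightarrow>
                    card {j. j < J \<and> xs j \<noteq> 0} \<le> card {j. j < J \<and> ys j \<noteq> 0}"
    using ex_has_least_nat[of "optimal_allocation F J x" xs0 "\<lambda>xs. card {j. j < J \<and> xs j \<noteq> 0}"]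
    by blast
  have "card {j. j < J \<and> xs j \<noteq> 0} \<le> CARD('n)"
  proof (rule ccontr)
    assume "\<not> ?thesis"
    then have "card {j. j < J \<and> xs j \<noteq> 0} > CARD('n)"
      by simp
    then obtain xs' where "optimal_allocation F J x xs'"
      and "card {j. j < J \<and> xs' j \<noteq> 0} < card {j. j < J \<and> xs j \<noteq> 0}"
      by (rule optimal_allocation_smaller_support[OF hom opt])
    with minimal show False
      by (meson not_le)
  qed
  with opt show ?thesis
    unfolding optimal_allocation_def allocations_def by (intro exI[of _ xs]) auto
qed

end
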